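(* Let $G=(V,E)$ be a finite undirected graph with $V \subset \mathbb{N}$, and let $\mathbf{p}=(p_e)_{e\in E}$ be any collection of probabilities $p_e \in [0,1]$. Let $\vec G(\mathbf{p})$ be the random orientation of $G$ in which each edge $e=\{x,y\}\in E$ with $x<y$ is oriented from $x$ to $y$ with probability $p_e$ and from $y$ to $x$ otherwise, independently over edges, and let $\mathbb{P}_{G,\mathbf{p}}$ denote the corresponding probability measure. For vertices $x,y$, write $x\rightarrow y$ for the event that $\vec G(\mathbf{p})$ contains a directed path from $x$ to $y$. Then for any three vertices $s,a,b\in V$, \[\mathbb{P}_{G,\mathbf{p}}(s\rightarrow a \cap s\rightarrow b) \ge \mathbb{P}_{G,\mathbf{p}}(s\rightarrow a)\, \mathbb{P}_{G,\mathbf{p}}(s\rightarrow b).\]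
   Context: A directed path from $x$ to $x$ is taken to exist trivially (the path of length zero), so $x\rightarrow x$ always holds. *)

theory Defs
  imports "HOL-Probability.Probability"
begin

text \<open>Undirected simple graph on vertex set V of naturals: edges are 2-element subsets.\<close>

definition arcs :: "nat set set \<Rightarrow> (nat set \<Rightarrow> bool) \<Rightarrow> (nat \<times> nat) set" where
  "arcs E \<sigma> = {(Min e, Max e) | e. e \<in> E \<and> \<sigma> e} \<union> {(Max e, Min e) | e. e \<in> E \<and> \<not> \<sigma> e}"

definition reaches :: "nat set set \<Rightarrow> (nat set \<Rightarrow> bool) \<Rightarrow> nat \<Rightarrow> nat \<Rightarrow> bool" where
  "reaches E \<sigma> x y \<longleftrightarrow> (x, y) \<in> (arcs E \<sigma>)\<^sup>*"

definition rand_orient :: "nat set set \<Rightarrow> (nat set \<Rightarrow> real) \<Rightarrow> (nat set \<Rightarrow> bool) pmf" where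
  "rand_orient E p = Pi_pmf E False (\<lambda>e. bernoulli_pmf (p e))"

end

theory Submission imports Defs "HOL-Probability.Probability" begin

text \<open>We prove more generally that the events \<open>a \<in> R\<close> and \<open>b \<in> R\<close> are positively correlated,
where \<open>R\<close> is the set of vertices reachable from an arbitrary source set \<open>S\<close>, by induction on the
number of edges. If no edge joins \<open>S\<close> to its complement then \<open>R = S\<close> is deterministic. Otherwise
pick such an edge \<open>{x, v}\<close> with \<open>x \<in> S\<close>: if it points into \<open>S\<close> it is useless for leaving \<open>S\<close>,
and if it points out of \<open>S\<close> it can be contracted into the new source set \<open>S \<union> {v}\<close>. So conditioning
on its orientation leaves the random orientation of the remaining edges with source set \<open>S\<close> or
\<open>S \<union> {v}\<close>; both events are monotone in the source set, and a mixture of two positively correlated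
laws that are ordered in this way is again positively correlated.\<close>

lemma mixture_correlation:
  fixes q a0 a1 b0 b1 c0 c1 :: real
  assumes "0 \<le> q" "q \<le> 1"
    and "a0 * b0 \<le> c0" "a1 * b1 \<le> c1" "a0 \<le> a1" "b0 \<le> b1"
  shows "(q * a1 + (1 - q) * a0) * (q * b1 + (1 - q) * b0) \<le> q * c1 + (1 - q) * c0"
proof -
  have "(q * a1 + (1 - q) * a0) * (q * b1 + (1 - q) * b0)
      = q * (a1 * b1) + (1 - q) * (a0 * b0) - q * (1 - q) * ((a1 - a0) * (b1 - b0))"
    by (simp add: algebra_simps)
  also have "\<dots> \<le> q * (a1 * b1) + (1 - q) * (a0 * b0)"
    using assms by simp
  also have "\<dots> \<le> q * c1 + (1 - q) * c0"
    using assms by (intro add_mono mult_left_mono) auto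
  finally show ?thesis .
qed

lemma measure_bind_bernoulli_pmf:
  assumes "0 \<le> q" "q \<le> 1"
  shows "measure_pmf.prob (bind_pmf (bernoulli_pmf q) K) X
       = q * measure_pmf.prob (K True) X + (1 - q) * measure_pmf.prob (K False) X"
proof -
  have "measure_pmf.prob (bind_pmf (bernoulli_pmf q) K) X
      = (\<integral>y. measure_pmf.prob (K y) X \<partial>bernoulli_pmf q)"
    unfolding measure_pmf_bind
    by (rule measure_pmf.measure_bind[where N = "count_space UNIV"])
      (auto intro: measurable_measure_pmf simp: space_subprob_algebra measure_pmf.subprob_space_axioms)
  then show ?thesis using assms by (simp add: mult.commute)
qed

lemma rtrancl_insert_Image_into:
  "x \<in> S \<Longrightarrow> (insert (v, x) R)\<^sup>* `` S = R\<^sup>* `` S"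
  by (auto simp: rtrancl_insert)

lemma rtrancl_insert_Image_out_of:
  "x \<in> S \<Longrightarrow> (insert (x, v) R)\<^sup>* `` S = R\<^sup>* `` insert v S"
  by (auto simp: rtrancl_insert)

lemma rtrancl_Image_closed:
  assumes "\<And>u w. (u, w) \<in> R \<Longrightarrow> u \<in> S \<Longrightarrow> w \<in> S"
  shows "R\<^sup>* `` S = S"
proof -
  have "w \<in> S" if "(u, w) \<in> R\<^sup>*" "u \<in> S" for u w
    using that by (induction rule: rtrancl_induct) (use assms in auto)
  then show ?thesis by auto
qed

lemma arcs_endpoints:
  assumes "(u, w) \<in> arcs E \<sigma>" "\<forall>e\<in>E. card e = 2"
  obtains e where "e \<in> E" "u \<in> e" "w \<in> e"
proof -
  obtain e where e: "e \<in> E" "{u, w} = {Min e, Max e}"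
    using assms(1) unfolding arcs_def by blast
  then have "finite e" "e \<noteq> {}"
    using assms(2) by (auto intro: card_ge_0_finite)
  then have "u \<in> e" "w \<in> e"
    using e(2) Min_in Max_in by (metis doubleton_eq_iff)+
  with e(1) show ?thesis by (rule that)
qed

lemma arcs_insert_fun_upd:
  assumes "e \<notin> E" "e = {x, v}" "x \<noteq> v"
  shows "arcs (insert e E) (\<sigma>(e := y))
       = insert (if y = (x = Min e) then (x, v) else (v, x)) (arcs E \<sigma>)"
proof -
  have "arcs (insert e E) \<tau> = insert (if \<tau> e then (Min e, Max e) else (Max e, Min e)) (arcs E \<tau>)"
    for \<tau>
    unfolding arcs_def by auto
  moreover have "arcs E (\<sigma>(e := y)) = arcs E \<sigma>"
    unfolding arcs_def using assms(1) by (auto; metis)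
  moreover have "(if y then (Min e, Max e) else (Max e, Min e))
      = (if y = (x = Min e) then (x, v) else (v, x))"
    using assms(2,3) by (auto simp: min_def max_def)
  ultimately show ?thesis by simp
qed

lemma rand_orient_insert:
  assumes "finite E" "e \<notin> E"
  shows "rand_orient (insert e E) p
       = bind_pmf (bernoulli_pmf (p e)) (\<lambda>y. map_pmf (\<lambda>\<sigma>. \<sigma>(e := y)) (rand_orient E p))"
  unfolding rand_orient_def using assms
  by (subst Pi_pmf_insert') (auto simp: map_pmf_def)

text \<open>The edge \<open>{x, v}\<close> points out of \<open>S\<close> with probability \<open>q\<close>.\<close>

lemma prob_reach_conditioned_on_leaving_edge:
  assumes "finite E" "e \<notin> E" "e = {x, v}" "x \<in> S" "v \<notin> S" "0 \<le> p e" "p e \<le> 1"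
  defines "q \<equiv> if x = Min e then p e else 1 - p e"
  shows "measure_pmf.prob (rand_orient (insert e E) p) {\<sigma>. P ((arcs (insert e E) \<sigma>)\<^sup>* `` S)}
       = q * measure_pmf.prob (rand_orient E p) {\<sigma>. P ((arcs E \<sigma>)\<^sup>* `` insert v S)}
         + (1 - q) * measure_pmf.prob (rand_orient E p) {\<sigma>. P ((arcs E \<sigma>)\<^sup>* `` S)}"
proof -
  have "x \<noteq> v" using assms(4,5) by auto
  have reach_upd: "(arcs (insert e E) (\<sigma>(e := y)))\<^sup>* `` S
      = (if y = (x = Min e) then (arcs E \<sigma>)\<^sup>* `` insert v S else (arcs E \<sigma>)\<^sup>* `` S)" for \<sigma> y
    using arcs_insert_fun_upd[OF assms(2,3) \<open>x \<noteq> v\<close>] assms(4)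
    by (simp add: rtrancl_insert_Image_into rtrancl_insert_Image_out_of)
  show ?thesis
    unfolding rand_orient_insert[OF assms(1,2)] measure_bind_bernoulli_pmf[OF assms(6,7)]
      measure_map_pmf
    by (simp add: vimage_def reach_upd q_def)
qed

lemma reach_from_set_correlated:
  fixes E :: "nat set set" and p :: "nat set \<Rightarrow> real"
  assumes "finite E" "\<forall>e\<in>E. card e = 2" "\<forall>e\<in>E. 0 \<le> p e \<and> p e \<le> 1"
  shows "measure_pmf.prob (rand_orient E p) {\<sigma>. a \<in> (arcs E \<sigma>)\<^sup>* `` S}
       * measure_pmf.prob (rand_orient E p) {\<sigma>. b \<in> (arcs E \<sigma>)\<^sup>* `` S}
     \<le> measure_pmf.prob (rand_orient E p) {\<sigma>. a \<in> (arcs E \<sigma>)\<^sup>* `` S \<and> b \<in> (arcs E \<sigma>)\<^sup>* `` S}"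
  using assms
proof (induction E arbitrary: S rule: finite_psubset_induct)
  case (psubset E)
  show ?case
  proof (cases "\<exists>e\<in>E. \<exists>x\<in>e. \<exists>v\<in>e. x \<in> S \<and> v \<notin> S")
    case False
    have "(arcs E \<sigma>)\<^sup>* `` S = S" for \<sigma>
      by (rule rtrancl_Image_closed) (use False psubset.prems(1) in \<open>blast elim: arcs_endpoints\<close>)
    then show ?thesis
      by (cases "a \<in> S"; cases "b \<in> S") auto
  next
    case True
    then obtain e x v where e: "e \<in> E" "x \<in> e" "v \<in> e" "x \<in> S" "v \<notin> S" by blast
    define E' where "E' = E - {e}"
    have E: "E = insert e E'" "e \<notin> E'" "finite E'" "E' \<subset> E"
      using e(1) psubset.hyps(1) by (auto simp: E'_def)
    have "e = {x, v}"
      using psubset.prems(1) e by (metis card_2_iff doubleton_eq_iff insertE singleton_iff)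
    define prob' where "prob' T A = measure_pmf.prob (rand_orient E' p) {\<sigma>. A ((arcs E' \<sigma>)\<^sup>* `` T)}"
      for T A
    have correlated': "prob' T (\<lambda>R. a \<in> R) * prob' T (\<lambda>R. b \<in> R) \<le> prob' T (\<lambda>R. a \<in> R \<and> b \<in> R)"
      for T
      unfolding prob'_def using psubset.IH[OF E(4)] psubset.prems by (auto simp: E'_def)
    have mono': "prob' S (\<lambda>R. c \<in> R) \<le> prob' (insert v S) (\<lambda>R. c \<in> R)" for c
      unfolding prob'_def
      by (rule measure_pmf.finite_measure_mono) (auto dest: Image_mono[OF order_refl, of S])
    define q where "q = (if x = Min e then p e else 1 - p e)"
    have "0 \<le> p e" "p e \<le> 1" using e(1) psubset.prems(2) by auto
    then have "0 \<le> q" "q \<le> 1" by (auto simp: q_def)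
    have "measure_pmf.prob (rand_orient E p) {\<sigma>. A ((arcs E \<sigma>)\<^sup>* `` S)}
        = q * prob' (insert v S) A + (1 - q) * prob' S A" for A
      unfolding E(1) prob'_def q_def
      by (rule prob_reach_conditioned_on_leaving_edge) (use E \<open>e = {x, v}\<close> e \<open>0 \<le> p e\<close> \<open>p e \<le> 1\<close> in auto)
    from this[of "\<lambda>R. a \<in> R"] this[of "\<lambda>R. b \<in> R"] this[of "\<lambda>R. a \<in> R \<and> b \<in> R"]
    show ?thesis
      using mixture_correlation[OF \<open>0 \<le> q\<close> \<open>q \<le> 1\<close> correlated' correlated' mono' mono'] by simp
  qed
qed

theorem theorem1:
  fixes V :: "nat set" and E :: "nat set set" and p :: "nat set \<Rightarrow> real"
    and s a b :: nat
  assumes "finite V"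
    and "\<forall>e\<in>E. e \<subseteq> V \<and> card e = 2"
    and "\<forall>e\<in>E. 0 \<le> p e \<and> p e \<le> 1"
    and "s \<in> V" and "a \<in> V" and "b \<in> V"
  shows "measure_pmf.prob (rand_orient E p) {\<sigma>. reaches E \<sigma> s a \<and> reaches E \<sigma> s b}
    \<ge> measure_pmf.prob (rand_orient E p) {\<sigma>. reaches E \<sigma> s a}
      * measure_pmf.prob (rand_orient E p) {\<sigma>. reaches E \<sigma> s b}"
proof -
  have "finite E"
    using assms(1,2) by (meson Pow_iff finite_Pow_iff finite_subset subsetI)
  moreover have "reaches E \<sigma> s c \<longleftrightarrow> c \<in> (arcs E \<sigma>)\<^sup>* `` {s}" for \<sigma> c
    by (simp add: reaches_def)
  ultimately show ?thesis
    using reach_from_set_correlated[of E p a "{s}" b] assms(2,3) by simp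
qed

end
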